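(* Let $R$ be a ring with unity, $N\geq 2$, and let $C$ be an $N$-complex of $R$-modules. Then $C$ is contractible if and only if $C$ is isomorphic to a direct sum (equivalently, product) of $N$-disks $\bigoplus_{n\in\mathbb{Z}} D^N_n(M_n)=\prod_{n\in\mathbb{Z}} D^N_n(M_n)$ for some family of $R$-modules $\{M_n\}_{n\in\mathbb{Z}}$. Moreover, in this case one can take $M_n={}_1Z_{n-(N-1)}(C)$.
   Context: An $N$-complex $X$ is a sequence of $R$-modules and maps $d_n:X_n\to X_{n-1}$ with any composite of $N$ consecutive maps equal to $0$. Chain maps are degreewise maps commuting with differentials. Two chain maps $f,g:X\to Y$ are chain homotopic if there are maps $s_n:X_n\to Y_{n+N-1}$ with $g_n-f_n=\sum_{i=0}^{N-1} d^{N-1-i}s_{n-i}d^i$ for all $n$; $C$ is contractible if $1_C$ is chain homotopic to $0$. For an $R$-module $M$, the disk $D^N_n(M)$ is the $N$-complex equal to $M$ in degrees $n,n-1,\dots,n-(N-1)$, joined by identity maps, and $0$ elsewhere. For an $N$-complex $X$, ${}_1Z_n(X)=\ker(d_n:X_n\to X_{n-1})$. *)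

theory Defs
  imports "HOL-Algebra.Ring" "HOL-Algebra.Module"
begin

text \<open>Left modules over an arbitrary (not necessarily commutative) ring with unity.
  (The library locale module requires a commutative ring, so we state the axioms directly.)\<close>
definition lmodule :: "('a, 'c) ring_scheme \<Rightarrow> ('a, 'b, 'd) module_scheme \<Rightarrow> bool" where
  "lmodule R M \<longleftrightarrow> ring R \<and> abelian_group M \<and>
     (\<forall>a\<in>carrier R. \<forall>x\<in>carrier M. a \<odot>\<^bsub>M\<^esub> x \<in> carrier M) \<and>
     (\<forall>a\<in>carrier R. \<forall>b\<in>carrier R. \<forall>x\<in>carrier M.
        (a \<oplus>\<^bsub>R\<^esub> b) \<odot>\<^bsub>M\<^esub> x = a \<odot>\<^bsub>M\<^esub> x \<oplus>\<^bsub>M\<^esub> b \<odot>\<^bsub>M\<^esub> x) \<and>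
     (\<forall>a\<in>carrier R. \<forall>x\<in>carrier M. \<forall>y\<in>carrier M.
        a \<odot>\<^bsub>M\<^esub> (x \<oplus>\<^bsub>M\<^esub> y) = a \<odot>\<^bsub>M\<^esub> x \<oplus>\<^bsub>M\<^esub> a \<odot>\<^bsub>M\<^esub> y) \<and>
     (\<forall>a\<in>carrier R. \<forall>b\<in>carrier R. \<forall>x\<in>carrier M.
        (a \<otimes>\<^bsub>R\<^esub> b) \<odot>\<^bsub>M\<^esub> x = a \<odot>\<^bsub>M\<^esub> (b \<odot>\<^bsub>M\<^esub> x)) \<and>
     (\<forall>x\<in>carrier M. \<one>\<^bsub>R\<^esub> \<odot>\<^bsub>M\<^esub> x = x)"

definition lin_map :: "('a, 'c) ring_scheme \<Rightarrow> ('a, 'b, 'd) module_scheme \<Rightarrow> ('a, 'e, 'f) module_scheme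
    \<Rightarrow> ('b \<Rightarrow> 'e) \<Rightarrow> bool" where
  "lin_map R M N f \<longleftrightarrow> (\<forall>x\<in>carrier M. f x \<in> carrier N) \<and>
     (\<forall>x\<in>carrier M. \<forall>y\<in>carrier M. f (x \<oplus>\<^bsub>M\<^esub> y) = f x \<oplus>\<^bsub>N\<^esub> f y) \<and>
     (\<forall>a\<in>carrier R. \<forall>x\<in>carrier M. f (a \<odot>\<^bsub>M\<^esub> x) = a \<odot>\<^bsub>N\<^esub> f x)"

text \<open>An N-complex is given by modules X n (n :: int) and differentials d n : X n -> X (n-1).
  dpow d k n is the k-fold composite d (n-k+1) o ... o d n : X n -> X (n-k).\<close>
fun dpow :: "(int \<Rightarrow> 'b \<Rightarrow> 'b) \<Rightarrow> nat \<Rightarrow> int \<Rightarrow> 'b \<Rightarrow> 'b" where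
  "dpow d 0 n = id"
| "dpow d (Suc k) n = d (n - int k) \<circ> dpow d k n"

definition ncomplex :: "('a, 'c) ring_scheme \<Rightarrow> nat \<Rightarrow> (int \<Rightarrow> ('a, 'b, 'd) module_scheme)
    \<Rightarrow> (int \<Rightarrow> 'b \<Rightarrow> 'b) \<Rightarrow> bool" where
  "ncomplex R N X d \<longleftrightarrow> (\<forall>n. lmodule R (X n)) \<and> (\<forall>n. lin_map R (X n) (X (n - 1)) (d n)) \<and>
     (\<forall>n. \<forall>x\<in>carrier (X n). dpow d N n x = \<zero>\<^bsub>X (n - int N)\<^esub>)"

definition chain_map :: "('a, 'c) ring_scheme \<Rightarrow> (int \<Rightarrow> ('a, 'b, 'd) module_scheme) \<Rightarrow> (int \<Rightarrow> 'b \<Rightarrow> 'b)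
    \<Rightarrow> (int \<Rightarrow> ('a, 'e, 'f) module_scheme) \<Rightarrow> (int \<Rightarrow> 'e \<Rightarrow> 'e) \<Rightarrow> (int \<Rightarrow> 'b \<Rightarrow> 'e) \<Rightarrow> bool" where
  "chain_map R X dX Y dY f \<longleftrightarrow> (\<forall>n. lin_map R (X n) (Y n) (f n)) \<and>
     (\<forall>n. \<forall>x\<in>carrier (X n). f (n - 1) (dX n x) = dY n (f n x))"

definition chain_homotopic :: "('a, 'c) ring_scheme \<Rightarrow> nat \<Rightarrow> (int \<Rightarrow> ('a, 'b, 'd) module_scheme)
    \<Rightarrow> (int \<Rightarrow> 'b \<Rightarrow> 'b) \<Rightarrow> (int \<Rightarrow> ('a, 'e, 'f) module_scheme) \<Rightarrow> (int \<Rightarrow> 'e \<Rightarrow> 'e)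
    \<Rightarrow> (int \<Rightarrow> 'b \<Rightarrow> 'e) \<Rightarrow> (int \<Rightarrow> 'b \<Rightarrow> 'e) \<Rightarrow> bool" where
  "chain_homotopic R N X dX Y dY f g \<longleftrightarrow>
     chain_map R X dX Y dY f \<and> chain_map R X dX Y dY g \<and>
     (\<exists>s. (\<forall>n. lin_map R (X n) (Y (n + int N - 1)) (s n)) \<and>
       (\<forall>n. \<forall>x\<in>carrier (X n).
          g n x \<ominus>\<^bsub>Y n\<^esub> f n x =
          finsum (Y n) (\<lambda>i. dpow dY (N - 1 - i) (n - int i + int N - 1) (s (n - int i) (dpow dX i n x)))
            {0..<N}))"

definition contractible :: "('a, 'c) ring_scheme \<Rightarrow> nat \<Rightarrow> (int \<Rightarrow> ('a, 'b, 'd) module_scheme)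
    \<Rightarrow> (int \<Rightarrow> 'b \<Rightarrow> 'b) \<Rightarrow> bool" where
  "contractible R N X d \<longleftrightarrow> chain_homotopic R N X d X d (\<lambda>n x. x) (\<lambda>n x. \<zero>\<^bsub>X n\<^esub>)"

definition ncomplex_iso :: "('a, 'c) ring_scheme \<Rightarrow> (int \<Rightarrow> ('a, 'b, 'd) module_scheme) \<Rightarrow> (int \<Rightarrow> 'b \<Rightarrow> 'b)
    \<Rightarrow> (int \<Rightarrow> ('a, 'e, 'f) module_scheme) \<Rightarrow> (int \<Rightarrow> 'e \<Rightarrow> 'e) \<Rightarrow> bool" where
  "ncomplex_iso R X dX Y dY \<longleftrightarrow>
     (\<exists>f. chain_map R X dX Y dY f \<and> (\<forall>n. bij_betw (f n) (carrier (X n)) (carrier (Y n))))"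

text \<open>The N-complex (direct sum = product) of the disks D^N_n(M n), n :: int.
  In degree k it is the (finite) direct sum of the M n with k <= n <= k+N-1, represented by
  functions on int supported in {k..k+N-1}; the differential is the identity on the components
  n with k <= n <= k+N-2 and zero on the component n = k+N-1 (which is absent in degree k-1).\<close>
definition disk_deg :: "nat \<Rightarrow> (int \<Rightarrow> ('a, 'b, 'd) module_scheme) \<Rightarrow> int \<Rightarrow> ('a, int \<Rightarrow> 'b) module" where
  "disk_deg N M k = \<lparr> carrier = {f. (\<forall>j\<in>{k..k + int N - 1}. f j \<in> carrier (M j)) \<and>
                                    (\<forall>j. j \<notin> {k..k + int N - 1} \<longrightarrow> f j = undefined)},
     mult = (\<lambda>f g. undefined), one = undefined,
     zero = (\<lambda>j. if j \<in> {k..k + int N - 1} then \<zero>\<^bsub>M j\<^esub> else undefined),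
     add = (\<lambda>f g j. if j \<in> {k..k + int N - 1} then f j \<oplus>\<^bsub>M j\<^esub> g j else undefined),
     smult = (\<lambda>a f j. if j \<in> {k..k + int N - 1} then a \<odot>\<^bsub>M j\<^esub> f j else undefined) \<rparr>"

definition disk_diff :: "nat \<Rightarrow> (int \<Rightarrow> ('a, 'b, 'd) module_scheme) \<Rightarrow> int \<Rightarrow> (int \<Rightarrow> 'b) \<Rightarrow> (int \<Rightarrow> 'b)" where
  "disk_diff N M k f = (\<lambda>j. if j \<in> {k..k + int N - 2} then f j
                            else if j = k - 1 then \<zero>\<^bsub>M j\<^esub> else undefined)"

definition cycles1 :: "(int \<Rightarrow> ('a, 'b, 'd) module_scheme) \<Rightarrow> (int \<Rightarrow> 'b \<Rightarrow> 'b) \<Rightarrow> int \<Rightarrow> ('a, 'b, 'd) module_scheme" where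
  "cycles1 X d n = (X n)\<lparr>carrier := {x \<in> carrier (X n). d n x = \<zero>\<^bsub>X (n - 1)\<^esub>}\<rparr>"

end

theory Submission
  imports Defs
begin

text \<open>A sum of disks is contracted by sending each summand at the bottom of its disk, negated, to
  the top of that disk; conjugating a contraction by an isomorphism of \<open>N\<close>-complexes gives a
  contraction again.

  Conversely, let \<open>s\<close> be a contraction of \<open>C\<close>. On a cycle \<open>w \<in> ker d\<^sub>m\<close> all terms of
  \<open>\<Sum>\<^sub>i d\<^sup>N\<^sup>-\<^sup>1\<^sup>-\<^sup>i s d\<^sup>i w = -w\<close> except the first vanish, so \<open>-s\<close> is a section of
  \<open>d\<^sup>N\<^sup>-\<^sup>1\<close> on cycles. Mapping the copy of \<open>ker d\<^sub>k\<^sub>+\<^sub>i\<^sub>-\<^sub>N\<^sub>+\<^sub>1\<close> in degree \<open>k\<close> of the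
  disk sum to \<open>C\<^sub>k\<close> by \<open>d\<^sup>i \<circ> (-s)\<close> gives a chain map. It is injective because a suitable power
  of \<open>d\<close> isolates the lowest nonzero component, and surjective by induction on the least \<open>t\<close>
  with \<open>d\<^sup>t x = 0\<close>, which exists since \<open>d\<^sup>N = 0\<close>.\<close>

section \<open>Modules over a ring and linear maps\<close>

lemma lmodule_abelian_group: "lmodule R M \<Longrightarrow> abelian_group M"
  by (simp add: lmodule_def)

lemma lmodule_smult_closed:
  "lmodule R M \<Longrightarrow> a \<in> carrier R \<Longrightarrow> x \<in> carrier M \<Longrightarrow> a \<odot>\<^bsub>M\<^esub> x \<in> carrier M"
  by (simp add: lmodule_def)

lemma lmodule_smult_add_right:
  "lmodule R M \<Longrightarrow> a \<in> carrier R \<Longrightarrow> x \<in> carrier M \<Longrightarrow> y \<in> carrier M \<Longrightarrow>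
   a \<odot>\<^bsub>M\<^esub> (x \<oplus>\<^bsub>M\<^esub> y) = a \<odot>\<^bsub>M\<^esub> x \<oplus>\<^bsub>M\<^esub> a \<odot>\<^bsub>M\<^esub> y"
  by (simp add: lmodule_def)

lemma lmodule_smult_zero:
  assumes "lmodule R M" "a \<in> carrier R"
  shows "a \<odot>\<^bsub>M\<^esub> \<zero>\<^bsub>M\<^esub> = \<zero>\<^bsub>M\<^esub>"
proof -
  interpret abelian_group M using assms lmodule_abelian_group by blast
  have c: "a \<odot>\<^bsub>M\<^esub> \<zero>\<^bsub>M\<^esub> \<in> carrier M" using lmodule_smult_closed[OF assms zero_closed] .
  have "a \<odot>\<^bsub>M\<^esub> \<zero>\<^bsub>M\<^esub> = a \<odot>\<^bsub>M\<^esub> (\<zero>\<^bsub>M\<^esub> \<oplus>\<^bsub>M\<^esub> \<zero>\<^bsub>M\<^esub>)" by simp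
  also have "\<dots> = a \<odot>\<^bsub>M\<^esub> \<zero>\<^bsub>M\<^esub> \<oplus>\<^bsub>M\<^esub> a \<odot>\<^bsub>M\<^esub> \<zero>\<^bsub>M\<^esub>"
    using lmodule_smult_add_right[OF assms zero_closed zero_closed] .
  finally show ?thesis using add.l_cancel_one'[OF c c] by simp
qed

lemma lmodule_smult_neg:
  assumes "lmodule R M" "a \<in> carrier R" "x \<in> carrier M"
  shows "a \<odot>\<^bsub>M\<^esub> (\<ominus>\<^bsub>M\<^esub> x) = \<ominus>\<^bsub>M\<^esub> (a \<odot>\<^bsub>M\<^esub> x)"
proof -
  interpret abelian_group M using assms lmodule_abelian_group by blast
  have "a \<odot>\<^bsub>M\<^esub> (\<ominus>\<^bsub>M\<^esub> x) \<oplus>\<^bsub>M\<^esub> a \<odot>\<^bsub>M\<^esub> x = a \<odot>\<^bsub>M\<^esub> (\<ominus>\<^bsub>M\<^esub> x \<oplus>\<^bsub>M\<^esub> x)"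
    using lmodule_smult_add_right[OF assms(1,2) a_inv_closed[OF assms(3)] assms(3)] by simp
  also have "\<dots> = \<zero>\<^bsub>M\<^esub>" using lmodule_smult_zero[OF assms(1,2)] l_neg[OF assms(3)] by simp
  finally show ?thesis
    using minus_equality lmodule_smult_closed assms a_inv_closed by metis
qed

lemma lmodule_truncate_iff: "lmodule R (module.truncate M) \<longleftrightarrow> lmodule R M"
  by (simp add: lmodule_def module.truncate_def abelian_group_def abelian_group_axioms_def
      abelian_monoid_def comm_group_def comm_monoid_def comm_monoid_axioms_def
      group_def group_axioms_def monoid_def Units_def)

lemma lmodule_restrict_carrier:
  assumes M: "lmodule R M" and sub: "S \<subseteq> carrier M" and zero: "\<zero>\<^bsub>M\<^esub> \<in> S"
    and add: "\<And>x y. x \<in> S \<Longrightarrow> y \<in> S \<Longrightarrow> x \<oplus>\<^bsub>M\<^esub> y \<in> S"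
    and neg: "\<And>x. x \<in> S \<Longrightarrow> \<ominus>\<^bsub>M\<^esub> x \<in> S"
    and smult: "\<And>a x. a \<in> carrier R \<Longrightarrow> x \<in> S \<Longrightarrow> a \<odot>\<^bsub>M\<^esub> x \<in> S"
  shows "lmodule R (M\<lparr>carrier := S\<rparr>)"
proof -
  interpret M: abelian_group M using lmodule_abelian_group[OF M] .
  have "abelian_group (M\<lparr>carrier := S\<rparr>)"
  proof (rule abelian_groupI)
    fix x assume x: "x \<in> carrier (M\<lparr>carrier := S\<rparr>)"
    then have "\<ominus>\<^bsub>M\<^esub> x \<oplus>\<^bsub>M\<^esub> x = \<zero>\<^bsub>M\<^esub>" using sub M.l_neg by auto
    then show "\<exists>y\<in>carrier (M\<lparr>carrier := S\<rparr>). y \<oplus>\<^bsub>M\<lparr>carrier := S\<rparr>\<^esub> x = \<zero>\<^bsub>M\<lparr>carrier := S\<rparr>\<^esub>"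
      using neg x by auto
  qed (use zero add sub M.a_assoc M.a_comm in \<open>auto simp: subset_iff\<close>)
  then show ?thesis
    using M sub smult unfolding lmodule_def by (auto simp: subset_iff)
qed

lemma lin_map_closed: "lin_map R M N f \<Longrightarrow> x \<in> carrier M \<Longrightarrow> f x \<in> carrier N"
  and lin_map_add:
    "lin_map R M N f \<Longrightarrow> x \<in> carrier M \<Longrightarrow> y \<in> carrier M \<Longrightarrow> f (x \<oplus>\<^bsub>M\<^esub> y) = f x \<oplus>\<^bsub>N\<^esub> f y"
  and lin_map_smult:
    "lin_map R M N f \<Longrightarrow> a \<in> carrier R \<Longrightarrow> x \<in> carrier M \<Longrightarrow> f (a \<odot>\<^bsub>M\<^esub> x) = a \<odot>\<^bsub>N\<^esub> f x"
  by (auto simp: lin_map_def)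

lemma lin_map_zero:
  assumes "abelian_group M" "abelian_group N" "lin_map R M N f"
  shows "f \<zero>\<^bsub>M\<^esub> = \<zero>\<^bsub>N\<^esub>"
proof -
  interpret M: abelian_group M by fact
  interpret N: abelian_group N by fact
  have c: "f \<zero>\<^bsub>M\<^esub> \<in> carrier N" using lin_map_closed[OF assms(3) M.zero_closed] .
  have "f \<zero>\<^bsub>M\<^esub> = f \<zero>\<^bsub>M\<^esub> \<oplus>\<^bsub>N\<^esub> f \<zero>\<^bsub>M\<^esub>"
    using lin_map_add[OF assms(3), of "\<zero>\<^bsub>M\<^esub>" "\<zero>\<^bsub>M\<^esub>"] by simp
  then show ?thesis using N.add.l_cancel_one'[OF c c] by simp
qed

lemma lin_map_neg:
  assumes "abelian_group M" "abelian_group N" "lin_map R M N f" "x \<in> carrier M"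
  shows "f (\<ominus>\<^bsub>M\<^esub> x) = \<ominus>\<^bsub>N\<^esub> f x"
proof -
  interpret M: abelian_group M by fact
  interpret N: abelian_group N by fact
  have "f (\<ominus>\<^bsub>M\<^esub> x) \<oplus>\<^bsub>N\<^esub> f x = f (\<ominus>\<^bsub>M\<^esub> x \<oplus>\<^bsub>M\<^esub> x)"
    using lin_map_add[OF assms(3) M.a_inv_closed[OF assms(4)] assms(4)] by simp
  also have "\<dots> = \<zero>\<^bsub>N\<^esub>" using M.l_neg[OF assms(4)] lin_map_zero[OF assms(1-3)] by simp
  finally show ?thesis
    using N.minus_equality lin_map_closed[OF assms(3)] assms(4) M.a_inv_closed by metis
qed

lemma lin_map_minus:
  assumes "abelian_group M" "abelian_group N" "lin_map R M N f" "x \<in> carrier M" "y \<in> carrier M"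
  shows "f (x \<ominus>\<^bsub>M\<^esub> y) = f x \<ominus>\<^bsub>N\<^esub> f y"
  using lin_map_neg[OF assms(1-3,5)] lin_map_add[OF assms(3,4) abelian_group.a_inv_closed[OF assms(1,5)]]
  by (simp add: a_minus_def)

lemma additive_finsum:
  assumes "abelian_group M" "abelian_group N"
    and closed: "\<And>x. x \<in> carrier M \<Longrightarrow> f x \<in> carrier N"
    and add: "\<And>x y. x \<in> carrier M \<Longrightarrow> y \<in> carrier M \<Longrightarrow> f (x \<oplus>\<^bsub>M\<^esub> y) = f x \<oplus>\<^bsub>N\<^esub> f y"
    and zero: "f \<zero>\<^bsub>M\<^esub> = \<zero>\<^bsub>N\<^esub>"
    and "finite I" "g \<in> I \<rightarrow> carrier M"
  shows "f (finsum M g I) = finsum N (\<lambda>i. f (g i)) I"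
  using \<open>finite I\<close> \<open>g \<in> I \<rightarrow> carrier M\<close>
proof (induction I rule: finite_induct)
  case empty
  interpret M: abelian_group M by fact
  interpret N: abelian_group N by fact
  show ?case using zero by simp
next
  case (insert i I)
  interpret M: abelian_group M by fact
  interpret N: abelian_group N by fact
  have g: "g \<in> I \<rightarrow> carrier M" "g i \<in> carrier M" using insert by auto
  have "f (finsum M g (insert i I)) = f (g i \<oplus>\<^bsub>M\<^esub> finsum M g I)"
    using insert g by (simp add: M.finsum_insert)
  also have "\<dots> = f (g i) \<oplus>\<^bsub>N\<^esub> finsum N (\<lambda>i. f (g i)) I"
    using add g M.finsum_closed insert by simp
  also have "\<dots> = finsum N (\<lambda>i. f (g i)) (insert i I)"
    using insert g closed by (subst N.finsum_insert) (auto simp: Pi_def)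
  finally show ?case .
qed

lemma lin_map_finsum:
  assumes "abelian_group M" "abelian_group N" "lin_map R M N f" "finite I" "g \<in> I \<rightarrow> carrier M"
  shows "f (finsum M g I) = finsum N (\<lambda>i. f (g i)) I"
  using additive_finsum[OF assms(1,2) lin_map_closed[OF assms(3)] lin_map_add[OF assms(3)]
      lin_map_zero[OF assms(1-3)] assms(4,5)] .

lemma lmodule_smult_finsum:
  assumes "lmodule R M" "a \<in> carrier R" "finite I" "g \<in> I \<rightarrow> carrier M"
  shows "a \<odot>\<^bsub>M\<^esub> finsum M g I = finsum M (\<lambda>i. a \<odot>\<^bsub>M\<^esub> g i) I"
  using additive_finsum[OF lmodule_abelian_group[OF assms(1)] lmodule_abelian_group[OF assms(1)],
      of "\<lambda>x. a \<odot>\<^bsub>M\<^esub> x", OF lmodule_smult_closed[OF assms(1,2)]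
      lmodule_smult_add_right[OF assms(1,2)] lmodule_smult_zero[OF assms(1,2)] assms(3,4)] .

lemma finsum_eq_single:
  assumes "abelian_group G" "finite I" "i0 \<in> I" "f \<in> I \<rightarrow> carrier G"
    and "\<And>i. i \<in> I \<Longrightarrow> i \<noteq> i0 \<Longrightarrow> f i = \<zero>\<^bsub>G\<^esub>"
  shows "finsum G f I = f i0"
proof -
  interpret abelian_group G by fact
  have "finsum G f I = finsum G (\<lambda>j. if i0 = j then f j else \<zero>\<^bsub>G\<^esub>) I"
    using assms(4,5) by (intro finsum_cong) (auto simp: Pi_def simp_implies_def)
  also have "\<dots> = f i0" using finsum_singleton[OF assms(3,2,4)] .
  finally show ?thesis .
qed

lemma lin_map_inj_on:
  assumes "abelian_group M" "abelian_group N" "lin_map R M N f"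
    and kernel: "\<And>x. x \<in> carrier M \<Longrightarrow> f x = \<zero>\<^bsub>N\<^esub> \<Longrightarrow> x = \<zero>\<^bsub>M\<^esub>"
  shows "inj_on f (carrier M)"
proof (rule inj_onI)
  interpret M: abelian_group M by fact
  interpret N: abelian_group N by fact
  fix x y assume xy: "x \<in> carrier M" "y \<in> carrier M" "f x = f y"
  then have "f (x \<ominus>\<^bsub>M\<^esub> y) = \<zero>\<^bsub>N\<^esub>"
    using lin_map_minus[OF assms(1-3)] lin_map_closed[OF assms(3)] N.r_neg by (simp add: a_minus_def)
  then have "x \<ominus>\<^bsub>M\<^esub> y = \<zero>\<^bsub>M\<^esub>" using kernel xy by simp
  moreover have "x = (x \<ominus>\<^bsub>M\<^esub> y) \<oplus>\<^bsub>M\<^esub> y" using xy by (simp add: a_minus_def M.a_assoc M.l_neg)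
  ultimately show "x = y" using xy by simp
qed

lemma lin_map_comp: "lin_map R M N f \<Longrightarrow> lin_map R N P g \<Longrightarrow> lin_map R M P (\<lambda>x. g (f x))"
  by (simp add: lin_map_def)

lemma lin_map_id: "lin_map R M M (\<lambda>x. x)"
  by (simp add: lin_map_def)

lemma lin_map_const_zero: "lmodule R N \<Longrightarrow> lin_map R M N (\<lambda>x. \<zero>\<^bsub>N\<^esub>)"
  unfolding lin_map_def
  using lmodule_smult_zero[of R N] abelian_groupE(2,5)[OF lmodule_abelian_group[of R N]] by auto

lemma lin_map_uminus:
  assumes "lmodule R N" "lin_map R M N f"
  shows "lin_map R M N (\<lambda>x. \<ominus>\<^bsub>N\<^esub> f x)"
proof -
  interpret N: abelian_group N using assms lmodule_abelian_group by blast
  show ?thesis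
    using assms lin_map_closed[OF assms(2)] lin_map_add[OF assms(2)] lin_map_smult[OF assms(2)]
      N.minus_add lmodule_smult_neg[OF assms(1)]
    unfolding lin_map_def by auto
qed

lemma lin_map_inv_into:
  assumes "lmodule R M" "lmodule R N" "lin_map R M N f" "bij_betw f (carrier M) (carrier N)"
  shows "lin_map R N M (inv_into (carrier M) f)"
proof -
  interpret M: abelian_group M using lmodule_abelian_group[OF assms(1)] .
  let ?g = "inv_into (carrier M) f"
  have im: "f ` carrier M = carrier N" using assms(4) by (simp add: bij_betw_def)
  have g_closed: "?g y \<in> carrier M" and f_g: "f (?g y) = y" if "y \<in> carrier N" for y
    using im that by (auto intro: inv_into_into f_inv_into_f)
  have inj: "u = v" if "u \<in> carrier M" "v \<in> carrier M" "f u = f v" for u v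
    using assms(4) that by (auto simp: bij_betw_def dest: inj_onD)
  show ?thesis unfolding lin_map_def
  proof (intro conjI ballI)
    fix x y assume xy: "x \<in> carrier N" "y \<in> carrier N"
    then have "f (?g x \<oplus>\<^bsub>M\<^esub> ?g y) = f (?g (x \<oplus>\<^bsub>N\<^esub> y))"
      using lin_map_add[OF assms(3) g_closed g_closed] f_g abelian_groupE(1)[OF lmodule_abelian_group[OF assms(2)]]
      by simp
    then show "?g (x \<oplus>\<^bsub>N\<^esub> y) = ?g x \<oplus>\<^bsub>M\<^esub> ?g y"
      using inj xy g_closed abelian_groupE(1)[OF lmodule_abelian_group[OF assms(2)]] by simp
  next
    fix a x assume ax: "a \<in> carrier R" "x \<in> carrier N"
    then have "f (a \<odot>\<^bsub>M\<^esub> ?g x) = f (?g (a \<odot>\<^bsub>N\<^esub> x))"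
      using lin_map_smult[OF assms(3) ax(1) g_closed] f_g lmodule_smult_closed[OF assms(2)] by simp
    then show "?g (a \<odot>\<^bsub>N\<^esub> x) = a \<odot>\<^bsub>M\<^esub> ?g x"
      using inj ax g_closed lmodule_smult_closed[OF assms(1)] lmodule_smult_closed[OF assms(2)] by simp
  qed (use g_closed in blast)
qed

section \<open>Iterated differentials, chain maps and contractions\<close>

lemma dpow_Suc_right: "dpow d (Suc k) n x = dpow d k (n - 1) (d n x)"
proof (induction k)
  case (Suc k)
  have "n - int (Suc k) = n - 1 - int k" by simp
  with Suc show ?case by (simp only: dpow.simps o_apply)
qed simp

lemma dpow_add: "dpow d (a + b) n x = dpow d b (n - int a) (dpow d a n x)"
proof (induction b)
  case (Suc b)
  have "n - int (a + b) = n - int a - int b" by simp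
  with Suc show ?case by (simp only: add_Suc_right dpow.simps o_apply)
qed simp

definition homotopy_sum ::
    "nat \<Rightarrow> (int \<Rightarrow> ('a, 'b, 'm) module_scheme) \<Rightarrow> (int \<Rightarrow> 'b \<Rightarrow> 'b) \<Rightarrow> (int \<Rightarrow> 'b \<Rightarrow> 'b) \<Rightarrow> int \<Rightarrow> 'b \<Rightarrow> 'b"
  where "homotopy_sum N X d s n x =
    finsum (X n) (\<lambda>i. dpow d (N - 1 - i) (n - int i + int N - 1) (s (n - int i) (dpow d i n x))) {0..<N}"

locale precomplex =
  fixes R :: "('a, 'r) ring_scheme" and X :: "int \<Rightarrow> ('a, 'b, 'm) module_scheme"
    and d :: "int \<Rightarrow> 'b \<Rightarrow> 'b"
  assumes lmodule: "\<And>n. lmodule R (X n)"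
    and lin_map_diff: "\<And>n. lin_map R (X n) (X (n - 1)) (d n)"
begin

lemma abelian_group: "abelian_group (X n)"
  using lmodule lmodule_abelian_group by blast

lemma diff_closed: "x \<in> carrier (X n) \<Longrightarrow> d n x \<in> carrier (X (n - 1))"
  using lin_map_closed[OF lin_map_diff] .

lemma lin_map_dpow: "p = n - int t \<Longrightarrow> lin_map R (X n) (X p) (dpow d t n)"
proof (induction t arbitrary: p)
  case (Suc t)
  then have "p = n - int t - 1" by simp
  then show ?case using lin_map_comp[OF Suc.IH lin_map_diff] by (simp add: o_def)
qed (simp add: lin_map_id id_def)

lemma dpow_closed: "x \<in> carrier (X n) \<Longrightarrow> p = n - int t \<Longrightarrow> dpow d t n x \<in> carrier (X p)"
  using lin_map_closed[OF lin_map_dpow] by blast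

lemma dpow_zero: "p = n - int t \<Longrightarrow> dpow d t n \<zero>\<^bsub>X n\<^esub> = \<zero>\<^bsub>X p\<^esub>"
  using lin_map_zero[OF abelian_group abelian_group lin_map_dpow] by blast

lemma chain_map_dpow:
  assumes "chain_map R X d Y dY f" "x \<in> carrier (X n)" "q = n - int t"
  shows "f q (dpow d t n x) = dpow dY t n (f n x)"
  using assms(3)
proof (induction t arbitrary: q)
  case (Suc t)
  have "dpow d t n x \<in> carrier (X (n - int t))" using dpow_closed[OF assms(2)] by simp
  then have "f (n - int t - 1) (d (n - int t) (dpow d t n x)) = dY (n - int t) (f (n - int t) (dpow d t n x))"
    using assms(1) unfolding chain_map_def by blast
  moreover have "q = n - int t - 1" using Suc.prems by simp
  ultimately show ?case using Suc.IH[OF refl] by (simp only: dpow.simps o_apply)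
qed simp

lemma chain_map_id: "chain_map R X d X d (\<lambda>n x. x)"
  unfolding chain_map_def by (simp add: lin_map_id)

lemma chain_map_zero: "chain_map R X d X d (\<lambda>n x. \<zero>\<^bsub>X n\<^esub>)"
  unfolding chain_map_def
  by (simp add: lin_map_const_zero lmodule lin_map_zero[OF abelian_group abelian_group lin_map_diff])

lemma homotopy_term_closed:
  assumes "\<And>n. lin_map R (X n) (X (n + int N - 1)) (s n)" "x \<in> carrier (X n)" "i < N"
  shows "dpow d (N - 1 - i) (n - int i + int N - 1) (s (n - int i) (dpow d i n x)) \<in> carrier (X n)"
proof -
  have "dpow d i n x \<in> carrier (X (n - int i))" using dpow_closed[OF assms(2)] by simp
  then have "s (n - int i) (dpow d i n x) \<in> carrier (X (n - int i + int N - 1))"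
    using lin_map_closed[OF assms(1)] by blast
  then show ?thesis by (rule dpow_closed) (use assms(3) in \<open>simp add: of_nat_diff\<close>)
qed

lemma contractible_iff_homotopy_sum:
  "contractible R N X d \<longleftrightarrow>
    (\<exists>s. (\<forall>n. lin_map R (X n) (X (n + int N - 1)) (s n)) \<and>
      (\<forall>n. \<forall>x\<in>carrier (X n). homotopy_sum N X d s n x = \<ominus>\<^bsub>X n\<^esub> x))"
proof -
  have "\<zero>\<^bsub>X n\<^esub> \<ominus>\<^bsub>X n\<^esub> x = \<ominus>\<^bsub>X n\<^esub> x" if "x \<in> carrier (X n)" for n x
    using that abelian_group.a_inv_closed[OF abelian_group] abelian_groupE(5)[OF abelian_group]
    by (simp add: a_minus_def)
  then have "(\<forall>n. \<forall>x\<in>carrier (X n). \<zero>\<^bsub>X n\<^esub> \<ominus>\<^bsub>X n\<^esub> x = homotopy_sum N X d s n x) \<longleftrightarrow>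
      (\<forall>n. \<forall>x\<in>carrier (X n). homotopy_sum N X d s n x = \<ominus>\<^bsub>X n\<^esub> x)" for s
    by (metis (no_types))
  then show ?thesis
    unfolding contractible_def chain_homotopic_def homotopy_sum_def[symmetric]
    using chain_map_id chain_map_zero by simp
qed

end

lemma chain_map_inv_into:
  assumes "precomplex R X dX" "precomplex R Y dY" "chain_map R X dX Y dY f"
    and bij: "\<And>n. bij_betw (f n) (carrier (X n)) (carrier (Y n))"
  shows "chain_map R Y dY X dX (\<lambda>n. inv_into (carrier (X n)) (f n))"
  unfolding chain_map_def
proof (intro conjI allI ballI)
  interpret X: precomplex R X dX by fact
  interpret Y: precomplex R Y dY by fact
  let ?g = "\<lambda>n. inv_into (carrier (X n)) (f n)"
  have g_closed: "?g n y \<in> carrier (X n)" and f_g: "f n (?g n y) = y" if "y \<in> carrier (Y n)" for n y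
    using bij that by (auto simp: bij_betw_def intro: inv_into_into f_inv_into_f)
  fix n
  show "lin_map R (Y n) (X n) (?g n)"
    using lin_map_inv_into[OF X.lmodule Y.lmodule _ bij] assms(3) unfolding chain_map_def by blast
  fix y assume y: "y \<in> carrier (Y n)"
  have "f (n - 1) (dX n (?g n y)) = dY n y"
    using assms(3) g_closed[OF y] f_g[OF y] unfolding chain_map_def by metis
  then show "?g (n - 1) (dY n y) = dX n (?g n y)"
    using bij[of "n - 1"] X.diff_closed[OF g_closed[OF y]] by (metis bij_betw_def inv_into_f_f)
qed

lemma ncomplex_iso_sym:
  assumes "precomplex R X dX" "precomplex R Y dY" "ncomplex_iso R X dX Y dY"
  shows "ncomplex_iso R Y dY X dX"
proof -
  obtain f where f: "chain_map R X dX Y dY f" and bij: "\<And>n. bij_betw (f n) (carrier (X n)) (carrier (Y n))"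
    using assms(3) unfolding ncomplex_iso_def by blast
  show ?thesis
    unfolding ncomplex_iso_def using chain_map_inv_into[OF assms(1,2) f bij] bij_betw_inv_into[OF bij] by blast
qed

lemma homotopy_sum_conjugate:
  assumes "precomplex R X dX" "precomplex R Y dY"
    and f: "chain_map R X dX Y dY f" and g: "chain_map R Y dY X dX g"
    and s: "\<And>n. lin_map R (Y n) (Y (n + int N - 1)) (s n)" and x: "x \<in> carrier (X n)"
  shows "homotopy_sum N X dX (\<lambda>n x. g (n + int N - 1) (s n (f n x))) n x =
    g n (homotopy_sum N Y dY s n (f n x))"
proof -
  interpret X: precomplex R X dX by fact
  interpret Y: precomplex R Y dY by fact
  have g_lin: "lin_map R (Y n) (X n) (g n)" using g unfolding chain_map_def by blast
  have fx: "f n x \<in> carrier (Y n)" using f x unfolding chain_map_def lin_map_def by blast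
  let ?T = "\<lambda>i. dpow dY (N - 1 - i) (n - int i + int N - 1) (s (n - int i) (dpow dY i n (f n x)))"
  have "homotopy_sum N X dX (\<lambda>n x. g (n + int N - 1) (s n (f n x))) n x = finsum (X n) (\<lambda>i. g n (?T i)) {0..<N}"
    unfolding homotopy_sum_def
  proof (intro abelian_monoid.finsum_cong' abelian_group.axioms(1)[OF X.abelian_group] refl)
    fix i assume "i \<in> {0..<N}"
    then have i: "i < N" by simp
    let ?p = "n - int i + int N - 1"
    have "s (n - int i) (dpow dY i n (f n x)) \<in> carrier (Y ?p)"
      using lin_map_closed[OF s Y.dpow_closed[OF fx]] by simp
    then show "dpow dX (N - 1 - i) ?p (g (n - int i + int N - 1) (s (n - int i) (f (n - int i) (dpow dX i n x))))
        = g n (?T i)"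
      unfolding X.chain_map_dpow[OF f x refl]
      using Y.chain_map_dpow[OF g, where t = "N - 1 - i" and n = ?p and q = n] i
      by (simp add: of_nat_diff)
  qed (use lin_map_closed[OF g_lin Y.homotopy_term_closed[OF s fx]] in auto)
  also have "\<dots> = g n (homotopy_sum N Y dY s n (f n x))"
    unfolding homotopy_sum_def
    using lin_map_finsum[OF Y.abelian_group X.abelian_group g_lin, of "{0..<N}"]
      Y.homotopy_term_closed[OF s fx] by auto
  finally show ?thesis .
qed

lemma contractible_transfer:
  assumes "precomplex R X dX" "precomplex R Y dY" "ncomplex_iso R X dX Y dY"
    and "contractible R N Y dY"
  shows "contractible R N X dX"
proof -
  interpret X: precomplex R X dX by fact
  interpret Y: precomplex R Y dY by fact
  obtain f where f: "chain_map R X dX Y dY f" and f_bij: "\<And>n. bij_betw (f n) (carrier (X n)) (carrier (Y n))"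
    using assms(3) unfolding ncomplex_iso_def by blast
  define g where "g n = inv_into (carrier (X n)) (f n)" for n
  have g: "chain_map R Y dY X dX g"
    unfolding g_def using chain_map_inv_into[OF assms(1,2) f f_bij] .
  obtain s where s: "\<And>n. lin_map R (Y n) (Y (n + int N - 1)) (s n)"
    and htpy: "\<And>n y. y \<in> carrier (Y n) \<Longrightarrow> homotopy_sum N Y dY s n y = \<ominus>\<^bsub>Y n\<^esub> y"
    using assms(4) unfolding Y.contractible_iff_homotopy_sum by blast
  have f_lin: "lin_map R (X n) (Y n) (f n)" and g_lin: "lin_map R (Y n) (X n) (g n)" for n
    using f g unfolding chain_map_def by blast+
  have "homotopy_sum N X dX (\<lambda>n x. g (n + int N - 1) (s n (f n x))) n x = \<ominus>\<^bsub>X n\<^esub> x"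
    if x: "x \<in> carrier (X n)" for n x
  proof -
    have fx: "f n x \<in> carrier (Y n)" using lin_map_closed[OF f_lin x] .
    have "g n (f n x) = x" unfolding g_def using f_bij x by (simp add: bij_betw_def)
    then show ?thesis
      unfolding homotopy_sum_conjugate[OF assms(1,2) f g s x] htpy[OF fx]
      using lin_map_neg[OF Y.abelian_group X.abelian_group g_lin fx] by simp
  qed
  moreover have "lin_map R (X n) (X (n + int N - 1)) (\<lambda>x. g (n + int N - 1) (s n (f n x)))" for n
    using lin_map_comp[OF lin_map_comp[OF f_lin s] g_lin] .
  ultimately show ?thesis
    unfolding X.contractible_iff_homotopy_sum
    by (intro exI[of _ "\<lambda>n x. g (n + int N - 1) (s n (f n x))"]) blast
qed

section \<open>Sums of disks\<close>

locale disk_sum =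
  fixes R :: "('a, 'r) ring_scheme" and N :: nat and M :: "int \<Rightarrow> ('a, 'b, 'm) module_scheme"
  assumes lmodule_component: "\<And>j. lmodule R (M j)" and N_pos: "0 < N"
begin

abbreviation "D \<equiv> disk_deg N M"
abbreviation "dD \<equiv> disk_diff N M"

lemma abelian_group_component: "abelian_group (M j)" using lmodule_abelian_group[OF lmodule_component] .

lemma carrier_disk: "f \<in> carrier (D k) \<longleftrightarrow> (\<forall>j\<in>{k..k + int N - 1}. f j \<in> carrier (M j)) \<and>
     (\<forall>j. j \<notin> {k..k + int N - 1} \<longrightarrow> f j = undefined)"
  by (simp add: disk_deg_def)

lemma zero_disk: "\<zero>\<^bsub>D k\<^esub> = (\<lambda>j. if j \<in> {k..k + int N - 1} then \<zero>\<^bsub>M j\<^esub> else undefined)"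
  by (simp add: disk_deg_def)
lemma add_disk: "x \<oplus>\<^bsub>D k\<^esub> y = (\<lambda>j. if j \<in> {k..k + int N - 1} then x j \<oplus>\<^bsub>M j\<^esub> y j else undefined)"
  by (simp add: disk_deg_def)
lemma smult_disk: "a \<odot>\<^bsub>D k\<^esub> y = (\<lambda>j. if j \<in> {k..k + int N - 1} then a \<odot>\<^bsub>M j\<^esub> y j else undefined)"
  by (simp add: disk_deg_def)

lemma disk_eqI: "x \<in> carrier (D k) \<Longrightarrow> y \<in> carrier (D k) \<Longrightarrow> (\<And>j. j \<in> {k..k + int N - 1} \<Longrightarrow> x j = y j) \<Longrightarrow> x = y"
  unfolding carrier_disk by (metis ext)

lemma disk_neg:
  assumes "x \<in> carrier (D k)"
  shows "(\<lambda>j. if j \<in> {k..k + int N - 1} then \<ominus>\<^bsub>M j\<^esub> x j else undefined) \<in> carrier (D k)"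
    and "(\<lambda>j. if j \<in> {k..k + int N - 1} then \<ominus>\<^bsub>M j\<^esub> x j else undefined) \<oplus>\<^bsub>D k\<^esub> x = \<zero>\<^bsub>D k\<^esub>"
  using assms abelian_group.a_inv_closed[OF abelian_group_component] abelian_group.l_neg[OF abelian_group_component]
  by (auto simp: carrier_disk add_disk zero_disk fun_eq_iff)

lemma abelian_group_disk: "abelian_group (D k)"
proof (rule abelian_groupI)
  fix x assume "x \<in> carrier (D k)"
  then show "\<exists>y\<in>carrier (D k). y \<oplus>\<^bsub>D k\<^esub> x = \<zero>\<^bsub>D k\<^esub>" using disk_neg by blast
qed (use abelian_groupE(1-5)[OF abelian_group_component] in \<open>auto simp: carrier_disk add_disk zero_disk fun_eq_iff\<close>)

lemma neg_disk:
  "x \<in> carrier (D k) \<Longrightarrow> \<ominus>\<^bsub>D k\<^esub> x = (\<lambda>j. if j \<in> {k..k + int N - 1} then \<ominus>\<^bsub>M j\<^esub> x j else undefined)"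
  using abelian_group.minus_equality[OF abelian_group_disk disk_neg(2) _ disk_neg(1)] by blast

lemma lmodule_disk: "lmodule R (D k)"
  using lmodule_component abelian_group_disk
  by (auto simp: lmodule_def carrier_disk smult_disk add_disk fun_eq_iff)

lemma finsum_disk_apply:
  assumes "finite I" "F \<in> I \<rightarrow> carrier (D k)" "j \<in> {k..k + int N - 1}"
  shows "finsum (D k) F I j = finsum (M j) (\<lambda>i. F i j) I"
  by (rule additive_finsum[OF abelian_group_disk abelian_group_component _ _ _ assms(1,2)])
    (use assms(3) in \<open>auto simp: carrier_disk add_disk zero_disk\<close>)

lemma lin_map_disk_diff: "lin_map R (D k) (D (k - 1)) (dD k)"
  using abelian_groupE(2,5)[OF abelian_group_component] lmodule_smult_zero[OF lmodule_component] N_pos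
  by (auto simp: lin_map_def carrier_disk disk_diff_def add_disk smult_disk fun_eq_iff)

sublocale D: precomplex R D dD
  by unfold_locales (auto intro: lmodule_disk lin_map_disk_diff)

lemma dpow_disk_diff:
  assumes y: "y \<in> carrier (D k)"
  shows "t \<le> N \<Longrightarrow> dpow dD t k y = (\<lambda>j. if j \<in> {k..k + int N - 1 - int t} then y j
            else if j \<in> {k - int t..k - 1} then \<zero>\<^bsub>M j\<^esub> else undefined)"
proof (induction t)
  case 0
  show ?case using y unfolding carrier_disk by (auto simp: fun_eq_iff)
next
  case (Suc t)
  then show ?case by (auto simp: disk_diff_def fun_eq_iff)
qed

text \<open>The summand of degree \<open>m\<close> at the bottom of its disk (index \<open>m + N - 1\<close>) is sent,
  negated, to the top of that disk.\<close>
definition disk_contraction :: "int \<Rightarrow> (int \<Rightarrow> 'b) \<Rightarrow> (int \<Rightarrow> 'b)" where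
  "disk_contraction m y = (\<lambda>j. if j = m + int N - 1 then \<ominus>\<^bsub>M j\<^esub> y j
      else if j \<in> {m + int N - 1..m + int N - 1 + int N - 1} then \<zero>\<^bsub>M j\<^esub> else undefined)"

lemma lin_map_disk_contraction: "lin_map R (D m) (D (m + int N - 1)) (disk_contraction m)"
  using abelian_groupE(2,5)[OF abelian_group_component] abelian_group.a_inv_closed[OF abelian_group_component]
    abelian_group.minus_add[OF abelian_group_component] lmodule_smult_zero[OF lmodule_component]
    lmodule_smult_neg[OF lmodule_component] N_pos
  by (auto simp: lin_map_def carrier_disk disk_contraction_def add_disk smult_disk fun_eq_iff)

lemma disk_homotopy_term:
  assumes y: "y \<in> carrier (D n)" and i: "i < N"
  shows "dpow dD (N - 1 - i) (n - int i + int N - 1) (disk_contraction (n - int i) (dpow dD i n y)) =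
    (\<lambda>j. if j = n + int N - 1 - int i then \<ominus>\<^bsub>M j\<^esub> y j else if j \<in> {n..n + int N - 1} then \<zero>\<^bsub>M j\<^esub> else undefined)"
proof -
  have w1: "dpow dD i n y \<in> carrier (D (n - int i))" using D.dpow_closed[OF y] by simp
  have w2: "disk_contraction (n - int i) (dpow dD i n y) \<in> carrier (D (n - int i + int N - 1))"
    using lin_map_closed[OF lin_map_disk_contraction w1] .
  have e1: "dpow dD i n y = (\<lambda>j. if j \<in> {n..n + int N - 1 - int i} then y j
            else if j \<in> {n - int i..n - 1} then \<zero>\<^bsub>M j\<^esub> else undefined)"
    by (rule dpow_disk_diff[OF y]) (use i in simp)
  have e2: "dpow dD (N - 1 - i) (n - int i + int N - 1) (disk_contraction (n - int i) (dpow dD i n y)) =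
     (\<lambda>j. if j \<in> {n - int i + int N - 1..n - int i + int N - 1 + int N - 1 - int (N - 1 - i)} then disk_contraction (n - int i) (dpow dD i n y) j
            else if j \<in> {n - int i + int N - 1 - int (N - 1 - i)..n - int i + int N - 1 - 1} then \<zero>\<^bsub>M j\<^esub> else undefined)"
    by (rule dpow_disk_diff[OF w2]) (use i in simp)
  show ?thesis
    unfolding e2 unfolding disk_contraction_def e1 using i by (auto simp: fun_eq_iff of_nat_diff)
qed

lemma homotopy_sum_disk:
  assumes y: "y \<in> carrier (D n)"
  shows "homotopy_sum N D dD disk_contraction n y = \<ominus>\<^bsub>D n\<^esub> y"
proof -
  let ?T = "\<lambda>i. dpow dD (N - 1 - i) (n - int i + int N - 1) (disk_contraction (n - int i) (dpow dD i n y))"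
  have Tc: "?T \<in> {0..<N} \<rightarrow> carrier (D n)"
    using D.homotopy_term_closed[OF lin_map_disk_contraction y] by auto
  have nc: "\<ominus>\<^bsub>D n\<^esub> y \<in> carrier (D n)" using abelian_group.a_inv_closed[OF abelian_group_disk y] .
  show ?thesis
    unfolding homotopy_sum_def
  proof (rule disk_eqI[OF abelian_monoid.finsum_closed[OF abelian_group.axioms(1)[OF abelian_group_disk] Tc] nc])
    fix j assume j: "j \<in> {n..n + int N - 1}"
    have "finsum (D n) ?T {0..<N} j = finsum (M j) (\<lambda>i. ?T i j) {0..<N}"
      using finsum_disk_apply[OF _ Tc j] by simp
    also have "\<dots> = ?T (nat (n + int N - 1 - j)) j"
    proof (rule finsum_eq_single[OF abelian_group_component])
      show "nat (n + int N - 1 - j) \<in> {0..<N}" using j by auto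
      show "(\<lambda>i. ?T i j) \<in> {0..<N} \<rightarrow> carrier (M j)" using Tc j unfolding Pi_def carrier_disk by blast
      fix i assume a: "i \<in> {0..<N}" "i \<noteq> nat (n + int N - 1 - j)"
      then have i: "i < N" by simp
      have e: "?T i j = (if j = n + int N - 1 - int i then \<ominus>\<^bsub>M j\<^esub> y j else if j \<in> {n..n + int N - 1} then \<zero>\<^bsub>M j\<^esub> else undefined)"
        unfolding disk_homotopy_term[OF y i] ..
      show "?T i j = \<zero>\<^bsub>M j\<^esub>" unfolding e using a j by auto
    qed simp
    also have "\<dots> = \<ominus>\<^bsub>M j\<^esub> y j"
    proof -
      have i0: "nat (n + int N - 1 - j) < N" using j by auto
      show ?thesis unfolding disk_homotopy_term[OF y i0] using j by auto
    qed
    also have "\<dots> = (\<ominus>\<^bsub>D n\<^esub> y) j" using j by (simp add: neg_disk[OF y])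
    finally show "finsum (D n) ?T {0..<N} j = (\<ominus>\<^bsub>D n\<^esub> y) j" .
  qed
qed

definition disk_single :: "int \<Rightarrow> int \<Rightarrow> 'b \<Rightarrow> (int \<Rightarrow> 'b)" where
  "disk_single k j y = (\<lambda>i. if i = j then y else if i \<in> {k..k + int N - 1} then \<zero>\<^bsub>M i\<^esub> else undefined)"

lemma disk_single_closed:
  "j \<in> {k..k + int N - 1} \<Longrightarrow> y \<in> carrier (M j) \<Longrightarrow> disk_single k j y \<in> carrier (D k)"
  unfolding carrier_disk disk_single_def using abelian_groupE(2)[OF abelian_group_component] by auto

lemma disk_sum_contractible: "contractible R N D dD"
  unfolding D.contractible_iff_homotopy_sum
  using lin_map_disk_contraction homotopy_sum_disk by blast

end

section \<open>Contractible \<open>N\<close>-complexes are sums of disks\<close>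

lemma add_cycles1 [simp]: "add (cycles1 X d n) = add (X n)"
  and zero_cycles1 [simp]: "zero (cycles1 X d n) = zero (X n)"
  and smult_cycles1 [simp]: "smult (cycles1 X d n) = smult (X n)"
  by (simp_all add: cycles1_def)

lemma carrier_cycles1: "carrier (cycles1 X d n) = {x \<in> carrier (X n). d n x = \<zero>\<^bsub>X (n - 1)\<^esub>}"
  by (simp add: cycles1_def)

lemma (in precomplex) cycles1_closed: "w \<in> carrier (cycles1 X d m) \<Longrightarrow> w \<in> carrier (X m)"
  by (simp add: carrier_cycles1)

lemma (in precomplex) lmodule_cycles1: "lmodule R (cycles1 X d n)"
proof -
  interpret X: abelian_group "X n" by (rule abelian_group)
  interpret Y: abelian_group "X (n - 1)" by (rule abelian_group)
  show ?thesis
    unfolding cycles1_def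
    by (rule lmodule_restrict_carrier[OF lmodule])
      (use lin_map_zero[OF abelian_group abelian_group lin_map_diff] lin_map_add[OF lin_map_diff]
        lin_map_neg[OF abelian_group abelian_group lin_map_diff] lin_map_smult[OF lin_map_diff]
        lmodule_smult_closed[OF lmodule] lmodule_smult_zero[OF lmodule] in \<open>auto simp: a_inv_def\<close>)
qed

lemma (in precomplex) dpow_cycle:
  assumes "x \<in> carrier (cycles1 X d m)" "0 < i" "p = m - int i"
  shows "dpow d i m x = \<zero>\<^bsub>X p\<^esub>"
proof -
  obtain k where k: "i = Suc k" using assms(2) gr0_implies_Suc by blast
  have "dpow d i m x = dpow d k (m - 1) \<zero>\<^bsub>X (m - 1)\<^esub>"
    unfolding k dpow_Suc_right using assms(1) by (simp add: carrier_cycles1)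
  also have "\<dots> = \<zero>\<^bsub>X p\<^esub>" by (rule dpow_zero) (use assms(3) k in simp)
  finally show ?thesis .
qed

locale N_complex = precomplex +
  fixes N :: nat
  assumes dpow_N_zero: "\<And>n x. x \<in> carrier (X n) \<Longrightarrow> dpow d N n x = \<zero>\<^bsub>X (n - int N)\<^esub>"
begin

lemma dpow_zero_if_ge:
  assumes "N \<le> t" "x \<in> carrier (X n)" "p = n - int t"
  shows "dpow d t n x = \<zero>\<^bsub>X p\<^esub>"
proof -
  obtain k where k: "t = N + k" using assms(1) le_Suc_ex by blast
  have "dpow d t n x = dpow d k (n - int N) \<zero>\<^bsub>X (n - int N)\<^esub>"
    unfolding k dpow_add using dpow_N_zero[OF assms(2)] by simp
  also have "\<dots> = \<zero>\<^bsub>X p\<^esub>" by (rule dpow_zero) (use assms(3) k in simp)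
  finally show ?thesis .
qed

end

lemma ncomplex_imp_N_complex: "ncomplex R N C d \<Longrightarrow> N_complex R C d N"
  unfolding ncomplex_def by unfold_locales auto

locale contracting_homotopy = N_complex +
  fixes s :: "int \<Rightarrow> 'b \<Rightarrow> 'b"
  assumes two_le_N: "2 \<le> N"
    and lin_map_s: "\<And>n. lin_map R (X n) (X (n + int N - 1)) (s n)"
    and homotopy: "\<And>n x. x \<in> carrier (X n) \<Longrightarrow> homotopy_sum N X d s n x = \<ominus>\<^bsub>X n\<^esub> x"
begin

definition cycle_lift :: "int \<Rightarrow> 'b \<Rightarrow> 'b" where
  "cycle_lift m w = \<ominus>\<^bsub>X (m + int N - 1)\<^esub> s m w"

lemma lin_map_cycle_lift: "q = m + int N - 1 \<Longrightarrow> lin_map R (X m) (X q) (cycle_lift m)"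
  unfolding cycle_lift_def using lin_map_uminus[OF lmodule lin_map_s] by simp

lemma dpow_cycle_lift:
  assumes w: "w \<in> carrier (cycles1 X d m)" and q: "q = m + int N - 1"
  shows "dpow d (N - 1) q (cycle_lift m w) = w"
proof -
  interpret Xm: abelian_group "X m" by (rule abelian_group)
  let ?T = "\<lambda>i. dpow d (N - 1 - i) (m - int i + int N - 1) (s (m - int i) (dpow d i m w))"
  have wc: "w \<in> carrier (X m)" using cycles1_closed[OF w] .
  have "\<ominus>\<^bsub>X m\<^esub> w = finsum (X m) ?T {0..<N}"
    using homotopy[OF wc] unfolding homotopy_sum_def by simp
  also have "\<dots> = ?T 0"
  proof (rule finsum_eq_single[OF abelian_group])
    show "?T \<in> {0..<N} \<rightarrow> carrier (X m)" using homotopy_term_closed[OF lin_map_s wc] by auto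
    fix i assume i: "i \<in> {0..<N}" "i \<noteq> 0"
    then have "s (m - int i) (dpow d i m w) = \<zero>\<^bsub>X (m - int i + int N - 1)\<^esub>"
      using dpow_cycle[OF w, of i] lin_map_zero[OF abelian_group abelian_group lin_map_s] by simp
    then show "?T i = \<zero>\<^bsub>X m\<^esub>" using dpow_zero i by (simp add: of_nat_diff)
  qed (use two_le_N in simp_all)
  also have "\<dots> = dpow d (N - 1) q (s m w)" using q by simp
  finally have sum: "\<ominus>\<^bsub>X m\<^esub> w = dpow d (N - 1) q (s m w)" .
  have "s m w \<in> carrier (X q)" using lin_map_closed[OF lin_map_s wc] q by simp
  then have "dpow d (N - 1) q (cycle_lift m w) = \<ominus>\<^bsub>X m\<^esub> dpow d (N - 1) q (s m w)"
    unfolding cycle_lift_def using lin_map_neg[OF abelian_group abelian_group lin_map_dpow] q two_le_N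
    by (simp add: of_nat_diff)
  also have "\<dots> = w" unfolding sum[symmetric] using wc by simp
  finally show ?thesis .
qed

abbreviation shifted_cycles where
  "shifted_cycles \<equiv> \<lambda>j. cycles1 X d (j - (int N - 1))"

sublocale Z: disk_sum R N shifted_cycles
  using lmodule_cycles1 two_le_N by unfold_locales auto

lemma disk_value_cycle:
  assumes "z \<in> carrier (Z.D k)" "i < N"
  shows "z (k + int i) \<in> carrier (cycles1 X d (k + int i - (int N - 1)))"
  using assms unfolding Z.carrier_disk by auto

definition disk_component :: "int \<Rightarrow> nat \<Rightarrow> 'b \<Rightarrow> 'b" where
  "disk_component k i w = dpow d i (k + int i) (cycle_lift (k + int i - (int N - 1)) w)"

lemma lin_map_disk_component: "lin_map R (X (k + int i - (int N - 1))) (X k) (disk_component k i)"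
  unfolding disk_component_def by (rule lin_map_comp[OF lin_map_cycle_lift lin_map_dpow]) simp_all

lemma dpow_disk_component:
  "dpow d b k (disk_component k i w) = dpow d (i + b) (k + int i) (cycle_lift (k + int i - (int N - 1)) w)"
  unfolding disk_component_def using dpow_add[of d i b "k + int i"] by simp

lemma dpow_disk_component_top:
  assumes "w \<in> carrier (cycles1 X d (k + int i - (int N - 1)))" "i + b = N - 1"
  shows "dpow d b k (disk_component k i w) = w"
  unfolding dpow_disk_component assms(2) by (rule dpow_cycle_lift[OF assms(1)]) simp

lemma dpow_disk_component_vanish:
  assumes "w \<in> carrier (X (k + int i - (int N - 1)))" "N \<le> i + b" "p = k - int b"
  shows "dpow d b k (disk_component k i w) = \<zero>\<^bsub>X p\<^esub>"
  unfolding dpow_disk_component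
  by (rule dpow_zero_if_ge[OF assms(2) lin_map_closed[OF lin_map_cycle_lift assms(1)]]) (use assms(3) in simp_all)

lemma diff_disk_component: "d k (disk_component k i w) = disk_component (k - 1) (Suc i) w"
  unfolding disk_component_def by simp

text \<open>The summand of index \<open>k + i\<close> in degree \<open>k\<close> lies \<open>i\<close> steps below the top of its disk;
  it is lifted along \<open>d\<^sup>N\<^sup>-\<^sup>1\<close> to the top and then pushed down \<open>i\<close> steps.\<close>
definition disk_sum_map :: "int \<Rightarrow> (int \<Rightarrow> 'b) \<Rightarrow> 'b" where
  "disk_sum_map k z = finsum (X k) (\<lambda>i. disk_component k i (z (k + int i))) {0..<N}"

lemma disk_sum_map_terms_closed:
  "z \<in> carrier (Z.D k) \<Longrightarrow> (\<lambda>i. disk_component k i (z (k + int i))) \<in> {0..<N} \<rightarrow> carrier (X k)"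
  using lin_map_closed[OF lin_map_disk_component] disk_value_cycle cycles1_closed by auto

lemma disk_sum_map_closed: "z \<in> carrier (Z.D k) \<Longrightarrow> disk_sum_map k z \<in> carrier (X k)"
  unfolding disk_sum_map_def
  using abelian_monoid.finsum_closed[OF abelian_group.axioms(1)[OF abelian_group] disk_sum_map_terms_closed] .

lemma lin_map_disk_sum_map: "lin_map R (Z.D k) (X k) (disk_sum_map k)"
  unfolding lin_map_def
proof (intro conjI ballI disk_sum_map_closed)
  interpret Xk: abelian_group "X k" by (rule abelian_group)
  have component: "z (k + int i) \<in> carrier (X (k + int i - (int N - 1)))"
    if "z \<in> carrier (Z.D k)" "i \<in> {0..<N}" for z i
    using disk_value_cycle cycles1_closed that by simp
  fix z z' assume z: "z \<in> carrier (Z.D k)" "z' \<in> carrier (Z.D k)"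
  have "disk_sum_map k (z \<oplus>\<^bsub>Z.D k\<^esub> z') =
      finsum (X k) (\<lambda>i. disk_component k i (z (k + int i)) \<oplus>\<^bsub>X k\<^esub> disk_component k i (z' (k + int i))) {0..<N}"
    unfolding disk_sum_map_def
    using lin_map_add[OF lin_map_disk_component component component] z
      disk_sum_map_terms_closed[OF z(1)] disk_sum_map_terms_closed[OF z(2)]
    by (intro Xk.finsum_cong') (auto simp: Z.add_disk)
  also have "\<dots> = disk_sum_map k z \<oplus>\<^bsub>X k\<^esub> disk_sum_map k z'"
    unfolding disk_sum_map_def
    using Xk.finsum_addf[OF disk_sum_map_terms_closed[OF z(1)] disk_sum_map_terms_closed[OF z(2)]] .
  finally show "disk_sum_map k (z \<oplus>\<^bsub>Z.D k\<^esub> z') = disk_sum_map k z \<oplus>\<^bsub>X k\<^esub> disk_sum_map k z'" .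
next
  interpret Xk: abelian_group "X k" by (rule abelian_group)
  have component: "z (k + int i) \<in> carrier (X (k + int i - (int N - 1)))"
    if "z \<in> carrier (Z.D k)" "i \<in> {0..<N}" for z i
    using disk_value_cycle cycles1_closed that by simp
  fix a z assume a: "a \<in> carrier R" and z: "z \<in> carrier (Z.D k)"
  have "disk_sum_map k (a \<odot>\<^bsub>Z.D k\<^esub> z) = finsum (X k) (\<lambda>i. a \<odot>\<^bsub>X k\<^esub> disk_component k i (z (k + int i))) {0..<N}"
    unfolding disk_sum_map_def
    using lin_map_smult[OF lin_map_disk_component a component] z disk_sum_map_terms_closed[OF z]
      lmodule_smult_closed[OF lmodule a]
    by (intro Xk.finsum_cong') (auto simp: Z.smult_disk Pi_iff)
  also have "\<dots> = a \<odot>\<^bsub>X k\<^esub> disk_sum_map k z"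
    unfolding disk_sum_map_def using lmodule_smult_finsum[OF lmodule a _ disk_sum_map_terms_closed[OF z]] by simp
  finally show "disk_sum_map k (a \<odot>\<^bsub>Z.D k\<^esub> z) = a \<odot>\<^bsub>X k\<^esub> disk_sum_map k z" .
qed

lemma disk_sum_map_diff:
  assumes z: "z \<in> carrier (Z.D k)"
  shows "disk_sum_map (k - 1) (Z.dD k z) = d k (disk_sum_map k z)"
proof -
  interpret Y: abelian_group "X (k - 1)" by (rule abelian_group)
  obtain n where N: "N = Suc (Suc n)" using two_le_N by (metis add_2_eq_Suc le_Suc_ex)
  have range: "{0..<N} = {..Suc n}" using N by auto
  define A where "A i = d k (disk_component k i (z (k + int i)))" for i
  define B where "B i = disk_component (k - 1) i (Z.dD k z (k - 1 + int i))" for i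
  have A_closed: "A \<in> {..Suc n} \<rightarrow> carrier (X (k - 1))"
    unfolding A_def using disk_sum_map_terms_closed[OF z] range diff_closed by auto
  have B_closed: "B \<in> {..Suc n} \<rightarrow> carrier (X (k - 1))"
    unfolding B_def using disk_sum_map_terms_closed[OF lin_map_closed[OF Z.lin_map_disk_diff z]] range
    by auto
  have "z (k + int (Suc n)) \<in> carrier (X (k + int (Suc n) - (int N - 1)))"
    by (rule cycles1_closed[OF disk_value_cycle[OF z]]) (simp add: N)
  from dpow_disk_component_vanish[OF this, of 1 "k - 1"]
  have A_top: "A (Suc n) = \<zero>\<^bsub>X (k - 1)\<^esub>"
    unfolding A_def using N by simp
  have B_bottom: "B 0 = \<zero>\<^bsub>X (k - 1)\<^esub>"
    unfolding B_def using lin_map_zero[OF abelian_group abelian_group lin_map_disk_component, of "k - 1" 0]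
    by (simp add: disk_diff_def)
  have B_shift: "B (Suc i) = A i" if "i \<le> n" for i
  proof -
    have "k - 1 + int (Suc i) = k + int i" by simp
    moreover have "Z.dD k z (k + int i) = z (k + int i)" using that N by (simp add: disk_diff_def)
    ultimately show ?thesis unfolding A_def B_def diff_disk_component by simp
  qed
  have "d k (disk_sum_map k z) = finsum (X (k - 1)) A {..Suc n}"
    unfolding disk_sum_map_def A_def range[symmetric]
    using lin_map_finsum[OF abelian_group abelian_group lin_map_diff _ disk_sum_map_terms_closed[OF z]] by simp
  also have "\<dots> = finsum (X (k - 1)) A {..n}"
    using A_closed by (simp add: A_top Pi_def)
  also have "\<dots> = finsum (X (k - 1)) (\<lambda>i. B (Suc i)) {..n}"
    using A_closed B_shift by (intro Y.finsum_cong') auto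
  also have "\<dots> = finsum (X (k - 1)) B {..Suc n}"
    using Y.finsum_Suc2[OF B_closed] B_closed by (simp add: B_bottom Pi_def)
  finally show ?thesis unfolding disk_sum_map_def B_def range by simp
qed

lemma chain_map_disk_sum_map: "chain_map R Z.D Z.dD X d disk_sum_map"
  unfolding chain_map_def using lin_map_disk_sum_map disk_sum_map_diff by simp

lemma dpow_disk_sum_map_lowest:
  assumes z: "z \<in> carrier (Z.D k)" and u: "u < N"
    and below: "\<And>i. i < u \<Longrightarrow> z (k + int i) = \<zero>\<^bsub>X (k + int i - (int N - 1))\<^esub>"
  shows "dpow d (N - 1 - u) k (disk_sum_map k z) = z (k + int u)"
proof -
  define p where "p = k - int (N - 1 - u)"
  let ?T = "\<lambda>i. dpow d (N - 1 - u) k (disk_component k i (z (k + int i)))"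
  have "dpow d (N - 1 - u) k (disk_sum_map k z) = finsum (X p) ?T {0..<N}"
    unfolding disk_sum_map_def
    using lin_map_finsum[OF abelian_group abelian_group lin_map_dpow[OF p_def] _ disk_sum_map_terms_closed[OF z]]
    by simp
  also have "\<dots> = ?T u"
  proof (rule finsum_eq_single[OF abelian_group])
    show "?T \<in> {0..<N} \<rightarrow> carrier (X p)"
      using disk_sum_map_terms_closed[OF z] dpow_closed[OF _ p_def] by blast
    fix i assume i: "i \<in> {0..<N}" "i \<noteq> u"
    show "?T i = \<zero>\<^bsub>X p\<^esub>"
    proof (cases "i < u")
      case True
      then show ?thesis
        using below dpow_zero[OF p_def] lin_map_zero[OF abelian_group abelian_group lin_map_disk_component]
        by simp
    next
      case False
      with i u show ?thesis
        by (intro dpow_disk_component_vanish[OF cycles1_closed[OF disk_value_cycle[OF z]]]) (simp_all add: p_def)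
    qed
  qed (use u in simp_all)
  also have "\<dots> = z (k + int u)"
    using dpow_disk_component_top disk_value_cycle[OF z u] u by simp
  finally show ?thesis .
qed

lemma disk_sum_map_kernel:
  assumes z: "z \<in> carrier (Z.D k)" and "disk_sum_map k z = \<zero>\<^bsub>X k\<^esub>"
  shows "z = \<zero>\<^bsub>Z.D k\<^esub>"
proof -
  have vanish: "\<forall>i<u. z (k + int i) = \<zero>\<^bsub>X (k + int i - (int N - 1))\<^esub>" if "u \<le> N" for u
    using that
  proof (induction u)
    case (Suc u)
    then have "z (k + int u) = dpow d (N - 1 - u) k \<zero>\<^bsub>X k\<^esub>"
      using dpow_disk_sum_map_lowest[OF z, of u] assms(2) by simp
    also have "\<dots> = \<zero>\<^bsub>X (k + int u - (int N - 1))\<^esub>" using Suc.prems by (intro dpow_zero) simp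
    finally show ?case using Suc less_Suc_eq by auto
  qed simp
  have "z j = \<zero>\<^bsub>Z.D k\<^esub> j" if "j \<in> {k..k + int N - 1}" for j
  proof -
    define i where "i = nat (j - k)"
    have j: "j = k + int i" "i < N" using that by (auto simp: i_def)
    then have "z j = \<zero>\<^bsub>X (j - (int N - 1))\<^esub>" using vanish[OF order_refl] by simp
    then show ?thesis using that by (simp add: Z.zero_disk)
  qed
  then show ?thesis using Z.disk_eqI[OF z abelian_groupE(2)[OF Z.abelian_group_disk]] by blast
qed

lemma inj_on_disk_sum_map: "inj_on (disk_sum_map k) (carrier (Z.D k))"
  using lin_map_inj_on[OF Z.abelian_group_disk abelian_group lin_map_disk_sum_map] disk_sum_map_kernel by blast

lemma disk_sum_map_single:
  assumes u: "u < N" and y: "y \<in> carrier (cycles1 X d (k + int u - (int N - 1)))"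
  shows "disk_sum_map k (Z.disk_single k (k + int u) y) = disk_component k u y"
proof -
  have "disk_sum_map k (Z.disk_single k (k + int u) y) = disk_component k u (Z.disk_single k (k + int u) y (k + int u))"
    unfolding disk_sum_map_def
  proof (rule finsum_eq_single[OF abelian_group])
    show "(\<lambda>i. disk_component k i (Z.disk_single k (k + int u) y (k + int i))) \<in> {0..<N} \<rightarrow> carrier (X k)"
      using disk_sum_map_terms_closed Z.disk_single_closed u y by simp
    fix i assume "i \<in> {0..<N}" "i \<noteq> u"
    then show "disk_component k i (Z.disk_single k (k + int u) y (k + int i)) = \<zero>\<^bsub>X k\<^esub>"
      using lin_map_zero[OF abelian_group abelian_group lin_map_disk_component]
      by (simp add: Z.disk_single_def)
  qed (use u in simp_all)
  then show ?thesis by (simp add: Z.disk_single_def)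
qed

lemma cycle_has_disk_preimage:
  assumes t: "t < N" and y: "y \<in> carrier (cycles1 X d (k - int t))"
  obtains z where "z \<in> carrier (Z.D k)" "dpow d t k (disk_sum_map k z) = y"
proof
  define u where "u = N - 1 - t"
  have u: "u < N" "u + t = N - 1" "k + int u - (int N - 1) = k - int t"
    using t by (auto simp: u_def of_nat_diff)
  have y': "y \<in> carrier (cycles1 X d (k + int u - (int N - 1)))" using y by (simp only: u(3))
  show "Z.disk_single k (k + int u) y \<in> carrier (Z.D k)"
    by (rule Z.disk_single_closed[OF _ y']) (use u(1) in simp)
  show "dpow d t k (disk_sum_map k (Z.disk_single k (k + int u) y)) = y"
    unfolding disk_sum_map_single[OF u(1) y'] using dpow_disk_component_top[OF y' u(2)] .
qed

text \<open>Induction on the least \<open>t\<close> with \<open>d\<^sup>t x = 0\<close>: the cycle \<open>d\<^sup>t x\<close> has a preimage,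
  and subtracting it lowers \<open>t\<close>.\<close>
lemma in_image_disk_sum_map:
  "t \<le> N \<Longrightarrow> x \<in> carrier (X k) \<Longrightarrow> dpow d t k x = \<zero>\<^bsub>X (k - int t)\<^esub> \<Longrightarrow>
    x \<in> disk_sum_map k ` carrier (Z.D k)"
proof (induction t arbitrary: x)
  case 0
  then have "x = disk_sum_map k \<zero>\<^bsub>Z.D k\<^esub>"
    using lin_map_zero[OF Z.abelian_group_disk abelian_group lin_map_disk_sum_map] by simp
  then show ?case using abelian_groupE(2)[OF Z.abelian_group_disk] by blast
next
  case (Suc t x)
  interpret Xk: abelian_group "X k" by (rule abelian_group)
  have "dpow d t k x \<in> carrier (cycles1 X d (k - int t))"
    using dpow_closed[OF Suc.prems(2)] Suc.prems(3) by (simp add: carrier_cycles1 algebra_simps)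
  then obtain z where z: "z \<in> carrier (Z.D k)" "dpow d t k (disk_sum_map k z) = dpow d t k x"
    using cycle_has_disk_preimage Suc.prems(1) by (metis Suc_le_lessD)
  have zc: "disk_sum_map k z \<in> carrier (X k)" using disk_sum_map_closed[OF z(1)] .
  have "dpow d t k (x \<ominus>\<^bsub>X k\<^esub> disk_sum_map k z) = \<zero>\<^bsub>X (k - int t)\<^esub>"
    using lin_map_minus[OF abelian_group abelian_group lin_map_dpow Suc.prems(2) zc] z(2)
      abelian_group.r_neg[OF abelian_group] dpow_closed[OF Suc.prems(2)] by (simp add: a_minus_def)
  then obtain z' where z': "z' \<in> carrier (Z.D k)" "disk_sum_map k z' = x \<ominus>\<^bsub>X k\<^esub> disk_sum_map k z"
    using Suc.IH[of "x \<ominus>\<^bsub>X k\<^esub> disk_sum_map k z"] Suc.prems(1,2) zc by auto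
  have "disk_sum_map k (z' \<oplus>\<^bsub>Z.D k\<^esub> z) = x"
    using lin_map_add[OF lin_map_disk_sum_map z'(1) z(1)] z'(2) Suc.prems(2) zc
    by (simp add: a_minus_def Xk.a_assoc Xk.l_neg)
  then show ?case using z'(1) z(1) abelian_groupE(1)[OF Z.abelian_group_disk] by blast
qed

lemma bij_betw_disk_sum_map: "bij_betw (disk_sum_map k) (carrier (Z.D k)) (carrier (X k))"
  unfolding bij_betw_def
  using inj_on_disk_sum_map disk_sum_map_closed in_image_disk_sum_map[OF order_refl _ dpow_N_zero] by blast

lemma iso_disk_sum_cycles: "ncomplex_iso R X d Z.D Z.dD"
  using ncomplex_iso_sym[OF Z.D.precomplex_axioms precomplex_axioms]
    chain_map_disk_sum_map bij_betw_disk_sum_map unfolding ncomplex_iso_def by blast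

end

lemma contractible_imp_iso_disk_sum_cycles:
  assumes "2 \<le> N" "ncomplex R N C d" "contractible R N C d"
  shows "ncomplex_iso R C d (disk_deg N (\<lambda>n. cycles1 C d (n - (int N - 1))))
    (disk_diff N (\<lambda>n. cycles1 C d (n - (int N - 1))))"
proof -
  interpret N_complex R C d N using ncomplex_imp_N_complex[OF assms(2)] .
  obtain s where "\<And>n. lin_map R (C n) (C (n + int N - 1)) (s n)"
    "\<And>n x. x \<in> carrier (C n) \<Longrightarrow> homotopy_sum N C d s n x = \<ominus>\<^bsub>C n\<^esub> x"
    using assms(3) unfolding contractible_iff_homotopy_sum by blast
  then interpret contracting_homotopy R C d N s
    using assms(1) by unfold_locales auto
  show ?thesis using iso_disk_sum_cycles .
qed

lemma contractible_if_iso_disk_sum: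
  assumes "0 < N" "precomplex R C d" "\<And>n. lmodule R (M n)"
    and "ncomplex_iso R C d (disk_deg N M) (disk_diff N M)"
  shows "contractible R N C d"
proof -
  interpret disk_sum R N M using assms(1,3) by unfold_locales
  show ?thesis using contractible_transfer[OF assms(2) D.precomplex_axioms assms(4) disk_sum_contractible] .
qed

lemma disk_deg_truncate: "disk_deg N (\<lambda>n. module.truncate (M n)) = disk_deg N M"
  by (simp add: fun_eq_iff disk_deg_def module.truncate_def)

lemma disk_diff_truncate: "disk_diff N (\<lambda>n. module.truncate (M n)) = disk_diff N M"
  by (simp add: fun_eq_iff disk_diff_def module.truncate_def)

theorem theorem3p3:
  fixes R :: "('a, 'r) ring_scheme" and N :: nat
    and C :: "int \<Rightarrow> ('a, 'b, 'm) module_scheme" and d :: "int \<Rightarrow> 'b \<Rightarrow> 'b"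
  assumes "ring R" and "N \<ge> 2" and "ncomplex R N C d"
  shows "(contractible R N C d \<longleftrightarrow>
            (\<exists>M :: int \<Rightarrow> ('a, 'b) module. (\<forall>n. lmodule R (M n)) \<and>
               ncomplex_iso R C d (disk_deg N M) (disk_diff N M)))
       \<and> (\<forall>M :: int \<Rightarrow> ('a, 'c) module. (\<forall>n. lmodule R (M n)) \<and>
               ncomplex_iso R C d (disk_deg N M) (disk_diff N M) \<longrightarrow> contractible R N C d)
       \<and> (contractible R N C d \<longrightarrow>
            ncomplex_iso R C d (disk_deg N (\<lambda>n. cycles1 C d (n - (int N - 1))))
                               (disk_diff N (\<lambda>n. cycles1 C d (n - (int N - 1)))))"
proof -
  interpret N_complex R C d N using ncomplex_imp_N_complex[OF assms(3)] .
  have N: "0 < N" using assms(2) by simp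
  note disks_contractible = contractible_if_iso_disk_sum[OF N precomplex_axioms]
  \<comment> \<open>The first conjunct asks for modules without record extension, hence the truncation.\<close>
  define Z where "Z n = module.truncate (cycles1 C d (n - (int N - 1)))" for n
  have Z: "\<forall>n. lmodule R (Z n)" unfolding Z_def lmodule_truncate_iff by (simp add: lmodule_cycles1)
  note cycles_iso = contractible_imp_iso_disk_sum_cycles[OF assms(2,3)]
  then have Z_iso: "ncomplex_iso R C d (disk_deg N Z) (disk_diff N Z)" if "contractible R N C d"
    unfolding Z_def disk_deg_truncate disk_diff_truncate using that .
  show ?thesis
  proof (intro conjI allI impI iffI)
    show "\<exists>M :: int \<Rightarrow> ('a, 'b) module. (\<forall>n. lmodule R (M n)) \<and>
        ncomplex_iso R C d (disk_deg N M) (disk_diff N M)" if "contractible R N C d"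
      using Z Z_iso[OF that] by blast
    show "contractible R N C d"
      if "\<exists>M :: int \<Rightarrow> ('a, 'b) module. (\<forall>n. lmodule R (M n)) \<and>
        ncomplex_iso R C d (disk_deg N M) (disk_diff N M)"
      using that disks_contractible by auto
    show "contractible R N C d"
      if "(\<forall>n. lmodule R (M n)) \<and> ncomplex_iso R C d (disk_deg N M) (disk_diff N M)"
      for M :: "int \<Rightarrow> ('a, 'c) module"
      using that disks_contractible by auto
  qed (use cycles_iso in blast)
qed

end
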